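(* Fix $0<a<2$. For every $p\in\mathbb N$ with $p<4/a$ and every $0<r<\infty$, $$Z(p,r):=\int_{\mathbb B(0,r)^p}\prod_{1\le i<j\le p}\frac1{\|z_j-z_i\|^{a}}\,dz_1\cdots dz_p<\infty.$$
   Context: Here $z_j\in\mathbb R^2$, $\|(t,x)\|=|t|+|x|$ on $\mathbb R^2$, $\mathbb B(0,r)=\{w\in\mathbb R^2:\|w\|<r\}$, and $\mathbb B(0,r)^p\subset\mathbb R^{2p}$ with Lebesgue measure. *)

theory Defs
  imports "HOL-Analysis.Analysis"
begin

definition norm1 :: "real \<times> real \<Rightarrow> real" where
  "norm1 w = \<bar>fst w\<bar> + \<bar>snd w\<bar>"

definition ball1 :: "real \<Rightarrow> (real \<times> real) set" where
  "ball1 r = {w. norm1 w < r}"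

text \<open>The factor 1/||z_j - z_i||^a is
taken in ennreal, so it equals infinity on the diagonal z_i = z_j.\<close>
definition Zint :: "real \<Rightarrow> nat \<Rightarrow> real \<Rightarrow> ennreal" where
  "Zint a p r = (\<integral>\<^sup>+ z. indicator (PiE {..<p} (\<lambda>_. ball1 r)) z *
      (\<Prod>ij\<in>{(i, j). i < j \<and> j < p}.
         inverse (ennreal (norm1 (z (snd ij) - z (fst ij)) powr a)))
      \<partial>(PiM {..<p} (\<lambda>_. (lborel :: (real \<times> real) measure))))"

end

theory Submission
  imports Defs
begin

(* Since (|t| + |x|)^2 >= |t| |x|, each factor ||z_j - z_i||^(-a) is bounded by the product
   kernel |t|^(-a/2) |x|^(-a/2) of the coordinates (t, x) of z_j - z_i. Splitting this bound evenly
   between the ordered pairs (i, j) and (j, i) turns the integrand into a product of p row products,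
   and a product of p numbers is at most the sum of their p-th powers. So the integrand is dominated
   by a sum of p star-shaped terms, in each of which every point interacts only with one centre z_i,
   through the product kernel with exponent a p / 4. Integrating out the other points first, each
   term factors into one-dimensional integrals of |s|^(-a p / 4) over bounded intervals, which are
   finite because a p / 4 < 1. *)

(* The value at s = 0 is \<infinity> for every c, because 0 powr c = 0. *)
definition inv_abs_powr :: "real \<Rightarrow> real \<Rightarrow> ennreal" where
  "inv_abs_powr c s = inverse (ennreal (\<bar>s\<bar> powr c))"

definition inv_coords_powr :: "real \<Rightarrow> real \<times> real \<Rightarrow> ennreal" where
  "inv_coords_powr c w = inv_abs_powr c (fst w) * inv_abs_powr c (snd w)"

lemma borel_measurable_inv_abs_powr [measurable]: "inv_abs_powr c \<in> borel_measurable borel"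
  unfolding inv_abs_powr_def by measurable

lemma borel_measurable_inv_coords_powr [measurable]: "inv_coords_powr c \<in> borel_measurable borel"
  unfolding inv_coords_powr_def borel_prod[symmetric] by measurable

lemma inv_abs_powr_0 [simp]: "inv_abs_powr c 0 = \<infinity>"
  by (simp add: inv_abs_powr_def)

lemma inv_abs_powr_nonzero: "s \<noteq> 0 \<Longrightarrow> inv_abs_powr c s = ennreal (\<bar>s\<bar> powr - c)"
  by (simp add: inv_abs_powr_def inverse_ennreal powr_minus)

lemma inv_abs_powr_minus [simp]: "inv_abs_powr c (- s) = inv_abs_powr c s"
  by (simp add: inv_abs_powr_def)

lemma inv_abs_powr_mult: "inv_abs_powr c s * inv_abs_powr d s = inv_abs_powr (c + d) s"
proof (cases "s = 0")
  case False
  have "\<bar>s\<bar> powr - c * \<bar>s\<bar> powr - d = \<bar>s\<bar> powr - (c + d)"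
    by (simp add: powr_add[symmetric])
  with False show ?thesis
    by (simp add: inv_abs_powr_nonzero ennreal_mult'[symmetric])
qed simp

lemma inv_abs_powr_power: "n \<noteq> 0 \<Longrightarrow> inv_abs_powr c s ^ n = inv_abs_powr (real n * c) s"
proof (induction n)
  case (Suc n)
  then show ?case
    by (cases "n = 0") (simp_all add: inv_abs_powr_mult algebra_simps)
qed simp

lemma inv_coords_powr_minus [simp]: "inv_coords_powr c (- w) = inv_coords_powr c w"
  by (simp add: inv_coords_powr_def)

lemma inv_coords_powr_power: "n \<noteq> 0 \<Longrightarrow> inv_coords_powr c w ^ n = inv_coords_powr (real n * c) w"
  by (simp add: inv_coords_powr_def power_mult_distrib inv_abs_powr_power)

lemma prod_lt_pairs_power2:
  fixes h :: "nat \<Rightarrow> nat \<Rightarrow> 'a::comm_monoid_mult"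
  assumes "\<And>i j. h i j = h j i"
  shows "(\<Prod>(i, j)\<in>{(i, j). i < j \<and> j < n}. h i j ^ 2) = (\<Prod>i<n. \<Prod>j\<in>{..<n} - {i}. h i j)"
proof -
  let ?P = "{(i, j). i < j \<and> j < n}" and ?Q = "{(i, j). j < i \<and> i < n}"
  have fin: "finite ?P" "finite ?Q"
    by (auto intro: finite_subset[of _ "{..<n} \<times> {..<n}"])
  have swap: "(\<Prod>(i, j)\<in>?P. h i j) = (\<Prod>(i, j)\<in>?Q. h i j)"
    by (rule prod.reindex_bij_witness[of _ prod.swap prod.swap]) (auto simp: assms)
  have "(\<Prod>(i, j)\<in>?P. h i j ^ 2) = (\<Prod>(i, j)\<in>?P. h i j) * (\<Prod>(i, j)\<in>?P. h i j)"
    by (simp add: power2_eq_square prod.distrib case_prod_unfold)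
  also have "\<dots> = (\<Prod>(i, j)\<in>?P. h i j) * (\<Prod>(i, j)\<in>?Q. h i j)"
    by (simp only: swap)
  also have "\<dots> = (\<Prod>(i, j)\<in>?P \<union> ?Q. h i j)"
    using fin by (intro prod.union_disjoint[symmetric]) auto
  also have "?P \<union> ?Q = Sigma {..<n} (\<lambda>i. {..<n} - {i})"
    by auto
  also have "(\<Prod>(i, j)\<in>Sigma {..<n} (\<lambda>i. {..<n} - {i}). h i j) = (\<Prod>i<n. \<Prod>j\<in>{..<n} - {i}. h i j)"
    by (rule prod.Sigma[symmetric]) auto
  finally show ?thesis .
qed

lemma prod_le_sum_power_card:
  fixes G :: "'a \<Rightarrow> ennreal"
  assumes "finite I" "I \<noteq> {}"
  shows "(\<Prod>i\<in>I. G i) \<le> (\<Sum>i\<in>I. G i ^ card I)"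
proof -
  have "Max (G ` I) \<in> G ` I"
    using assms by (intro Max_in) auto
  then obtain k where k: "k \<in> I" "G k = Max (G ` I)"
    by auto
  then have "(\<Prod>i\<in>I. G i) \<le> (\<Prod>i\<in>I. G k)"
    using assms by (intro prod_mono_ennreal) simp
  also have "\<dots> = G k ^ card I"
    by simp
  also have "\<dots> \<le> (\<Sum>i\<in>I. G i ^ card I)"
    using k assms by (intro member_le_sum) auto
  finally show ?thesis .
qed

lemma inverse_norm1_powr_le:
  assumes "0 \<le> a"
  shows "inverse (ennreal (norm1 w powr a)) \<le> inv_coords_powr (a / 2) w"
proof (cases "fst w = 0 \<or> snd w = 0")
  case True
  then show ?thesis
    by (auto simp: inv_coords_powr_def inv_abs_powr_def ennreal_mult_eq_top_iff)
next
  case False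
  define t x where "t = \<bar>fst w\<bar>" and "x = \<bar>snd w\<bar>"
  have tx: "0 < t" "0 < x" "norm1 w = t + x"
    using False by (auto simp: t_def x_def norm1_def)
  have "t powr (a / 2) * x powr (a / 2) = (t * x) powr (a / 2)"
    using tx by (simp add: powr_mult)
  also have "\<dots> \<le> ((t + x) powr 2) powr (a / 2)"
    using tx assms by (intro powr_mono2) (auto simp: power2_eq_square algebra_simps)
  also have "\<dots> = (t + x) powr a"
    by (simp add: powr_powr)
  finally have "inverse ((t + x) powr a) \<le> inverse (t powr (a / 2) * x powr (a / 2))"
    using tx by (intro le_imp_inverse_le) auto
  then have "ennreal ((t + x) powr - a) \<le> ennreal (t powr - (a / 2)) * ennreal (x powr - (a / 2))"
    by (simp add: powr_minus ennreal_mult'[symmetric] ennreal_leI)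
  then show ?thesis
    using tx False
    by (simp add: inv_coords_powr_def inv_abs_powr_nonzero inverse_ennreal powr_minus t_def x_def)
qed

lemma prod_inverse_norm1_powr_le:
  assumes "0 \<le> a" "p \<noteq> 0"
  shows "(\<Prod>ij\<in>{(i, j). i < j \<and> j < p}. inverse (ennreal (norm1 (z (snd ij) - z (fst ij)) powr a)))
    \<le> (\<Sum>i<p. \<Prod>j\<in>{..<p} - {i}. inv_coords_powr (real p * (a / 4)) (z j - z i))"
proof -
  define h where "h i j = inv_coords_powr (a / 4) (z j - z i)" for i j
  have "(\<Prod>ij\<in>{(i, j). i < j \<and> j < p}. inverse (ennreal (norm1 (z (snd ij) - z (fst ij)) powr a)))
      \<le> (\<Prod>(i, j)\<in>{(i, j). i < j \<and> j < p}. h i j ^ 2)"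
    using assms(1) by (intro prod_mono_ennreal)
      (auto simp: h_def inv_coords_powr_power intro: order_trans[OF inverse_norm1_powr_le])
  also have "\<dots> = (\<Prod>i<p. \<Prod>j\<in>{..<p} - {i}. h i j)"
    by (rule prod_lt_pairs_power2) (metis h_def minus_diff_eq inv_coords_powr_minus)
  also have "\<dots> \<le> (\<Sum>i<p. (\<Prod>j\<in>{..<p} - {i}. h i j) ^ p)"
    using prod_le_sum_power_card[of "{..<p}" "\<lambda>i. \<Prod>j\<in>{..<p} - {i}. h i j"] assms(2)
    by (simp add: lessThan_empty_iff)
  also have "\<dots> = (\<Sum>i<p. \<Prod>j\<in>{..<p} - {i}. inv_coords_powr (real p * (a / 4)) (z j - z i))"
    using assms(2) by (simp add: h_def prod_power_distrib inv_coords_powr_power)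
  finally show ?thesis .
qed

lemma nn_integral_inv_abs_powr_Icc_0_finite:
  assumes "c < 1" "0 \<le> R"
  shows "(\<integral>\<^sup>+s. indicator {0..R} s * inv_abs_powr c s \<partial>lborel) < \<infinity>"
proof -
  have "AE s in lborel. indicator {0..R} s * inv_abs_powr c s = ennreal (indicator {0..R} s * s powr - c)"
    using AE_lborel_singleton[of 0] by eventually_elim (auto simp: inv_abs_powr_nonzero indicator_def)
  then have "(\<integral>\<^sup>+s. indicator {0..R} s * inv_abs_powr c s \<partial>lborel)
      = (\<integral>\<^sup>+s. ennreal (indicator {0..R} s * s powr - c) \<partial>lborel)"
    by (rule nn_integral_cong_AE)
  also have "\<dots> = ennreal (R powr (- c + 1) / (- c + 1))"
  proof -
    have "((\<lambda>s. s powr - c) has_integral R powr (- c + 1) / (- c + 1)) {0..R}"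
      using assms by (intro has_integral_powr_from_0) auto
    moreover have "(\<lambda>s. indicator {0..R} s * s powr - c) = (\<lambda>s. if s \<in> {0..R} then s powr - c else 0)"
      by (auto simp: indicator_def)
    ultimately have "((\<lambda>s. indicator {0..R} s * s powr - c) has_integral R powr (- c + 1) / (- c + 1)) UNIV"
      by (simp only: has_integral_restrict_UNIV)
    then show ?thesis
      by (subst nn_integral_has_integral_lborel) (auto simp: indicator_def)
  qed
  finally show ?thesis
    by simp
qed

lemma nn_integral_inv_abs_powr_finite:
  assumes "c < 1" "0 \<le> R"
  shows "(\<integral>\<^sup>+s. indicator {-R..R} s * inv_abs_powr c s \<partial>lborel) < \<infinity>"
proof -
  let ?f = "\<lambda>s. indicator {0..R} s * inv_abs_powr c s"
  have "(\<integral>\<^sup>+s. indicator {-R..R} s * inv_abs_powr c s \<partial>lborel) \<le> (\<integral>\<^sup>+s. ?f s + ?f (- s) \<partial>lborel)"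
    by (rule nn_integral_mono) (auto simp: indicator_def)
  also have "\<dots> = (\<integral>\<^sup>+s. ?f s \<partial>lborel) + (\<integral>\<^sup>+s. ?f (- s) \<partial>lborel)"
    by (rule nn_integral_add) auto
  also have "(\<integral>\<^sup>+s. ?f (- s) \<partial>lborel) = (\<integral>\<^sup>+s. ?f s \<partial>lborel)"
    using nn_integral_real_affine[of ?f "-1" 0] by simp
  finally show ?thesis
    using nn_integral_inv_abs_powr_Icc_0_finite[OF assms] by (simp add: order_le_less_trans)
qed

lemma (in pair_sigma_finite) nn_integral_fst_snd_mult:
  assumes [measurable]: "f \<in> borel_measurable M1" "g \<in> borel_measurable M2"
  shows "(\<integral>\<^sup>+w. f (fst w) * g (snd w) \<partial>(M1 \<Otimes>\<^sub>M M2)) = (\<integral>\<^sup>+x. f x \<partial>M1) * (\<integral>\<^sup>+y. g y \<partial>M2)"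
proof -
  have "(\<integral>\<^sup>+w. f (fst w) * g (snd w) \<partial>(M1 \<Otimes>\<^sub>M M2)) = (\<integral>\<^sup>+x. \<integral>\<^sup>+y. f x * g y \<partial>M2 \<partial>M1)"
    by (subst M2.nn_integral_fst[symmetric]) auto
  also have "\<dots> = (\<integral>\<^sup>+x. f x * (\<integral>\<^sup>+y. g y \<partial>M2) \<partial>M1)"
    by (simp add: nn_integral_cmult)
  also have "\<dots> = (\<integral>\<^sup>+x. f x \<partial>M1) * (\<integral>\<^sup>+y. g y \<partial>M2)"
    by (simp add: nn_integral_multc)
  finally show ?thesis .
qed

lemma nn_integral_inv_coords_powr_finite:
  assumes "c < 1" "0 \<le> R"
  shows "(\<integral>\<^sup>+w. indicator ({-R..R} \<times> {-R..R}) w * inv_coords_powr c w \<partial>lborel) < \<infinity>"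
proof -
  let ?f = "\<lambda>s. indicator {-R..R} s * inv_abs_powr c s"
  have "(\<integral>\<^sup>+w. indicator ({-R..R} \<times> {-R..R}) w * inv_coords_powr c w \<partial>lborel)
      = (\<integral>\<^sup>+w. ?f (fst w) * ?f (snd w) \<partial>(lborel \<Otimes>\<^sub>M lborel))"
    by (simp add: lborel_prod indicator_times inv_coords_powr_def mult_ac)
  also have "\<dots> = (\<integral>\<^sup>+s. ?f s \<partial>lborel) * (\<integral>\<^sup>+s. ?f s \<partial>lborel)"
    by (rule lborel_pair.nn_integral_fst_snd_mult) auto
  finally show ?thesis
    using nn_integral_inv_abs_powr_finite[OF assms] by (simp add: ennreal_mult_less_top)
qed

lemma nn_integral_inv_coords_powr_shift_le:
  assumes "y \<in> ball1 r"
  shows "(\<integral>\<^sup>+u. indicator (ball1 r) u * inv_coords_powr c (u - y) \<partial>lborel)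
    \<le> (\<integral>\<^sup>+w. indicator ({-2*r..2*r} \<times> {-2*r..2*r}) w * inv_coords_powr c w \<partial>lborel)"
    (is "_ \<le> (\<integral>\<^sup>+w. ?f w \<partial>lborel)")
proof -
  have [measurable]: "{-2*r..2*r} \<times> {-2*r..2*r} \<in> sets borel"
    by (intro borel_closed closed_Times) auto
  have "u - y \<in> {-2*r..2*r} \<times> {-2*r..2*r}" if "u \<in> ball1 r" for u
    using that assms by (auto simp: ball1_def norm1_def mem_Times_iff)
  then have "(\<integral>\<^sup>+u. indicator (ball1 r) u * inv_coords_powr c (u - y) \<partial>lborel) \<le> (\<integral>\<^sup>+u. ?f (- y + u) \<partial>lborel)"
    by (intro nn_integral_mono) (auto simp: indicator_def)
  also have "\<dots> = (\<integral>\<^sup>+w. ?f w \<partial>distr lborel borel ((+) (- y)))"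
    by (rule nn_integral_distr[symmetric]) measurable
  also have "\<dots> = (\<integral>\<^sup>+w. ?f w \<partial>lborel)"
    by (simp only: lborel_distr_plus)
  finally show ?thesis .
qed

lemma nn_integral_PiM_star:
  fixes B :: "'a \<Rightarrow> ennreal" and K :: "'a \<Rightarrow> 'a \<Rightarrow> ennreal"
  assumes "sigma_finite_measure M" "finite I" "i \<in> I"
    and [measurable]: "B \<in> borel_measurable M" "case_prod K \<in> borel_measurable (M \<Otimes>\<^sub>M M)"
  shows "(\<integral>\<^sup>+z. (\<Prod>j\<in>I. B (z j)) * (\<Prod>j\<in>I - {i}. K (z j) (z i)) \<partial>PiM I (\<lambda>_. M))
    = (\<integral>\<^sup>+y. B y * (\<integral>\<^sup>+u. B u * K u y \<partial>M) ^ (card I - 1) \<partial>M)"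
proof -
  interpret product_sigma_finite "\<lambda>_. M"
    using assms(1) by (simp add: product_sigma_finite_def)
  define J where "J = I - {i}"
  have I: "I = insert i J" "i \<notin> J" "finite J" "card J = card I - 1"
    using assms(2,3) by (auto simp: J_def)
  have "(\<integral>\<^sup>+z. (\<Prod>j\<in>I. B (z j)) * (\<Prod>j\<in>J. K (z j) (z i)) \<partial>PiM I (\<lambda>_. M))
      = (\<integral>\<^sup>+y. (\<integral>\<^sup>+x. (\<Prod>j\<in>insert i J. B ((x(i := y)) j)) * (\<Prod>j\<in>J. K ((x(i := y)) j) y)
          \<partial>PiM J (\<lambda>_. M)) \<partial>M)"
    unfolding I(1) using I(2,3) assms(3) by (subst product_nn_integral_insert_rev) auto
  also have "\<dots> = (\<integral>\<^sup>+y. B y * (\<integral>\<^sup>+u. B u * K u y \<partial>M) ^ card J \<partial>M)"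
  proof (intro nn_integral_cong)
    fix y assume [simp]: "y \<in> space M"
    have "(\<integral>\<^sup>+x. (\<Prod>j\<in>insert i J. B ((x(i := y)) j)) * (\<Prod>j\<in>J. K ((x(i := y)) j) y) \<partial>PiM J (\<lambda>_. M))
        = (\<integral>\<^sup>+x. B y * (\<Prod>j\<in>J. B (x j) * K (x j) y) \<partial>PiM J (\<lambda>_. M))"
    proof (intro nn_integral_cong)
      fix x :: "'b \<Rightarrow> 'a"
      have "(x(i := y)) j = x j" if "j \<in> J" for j
        using that I(2) by auto
      then show "(\<Prod>j\<in>insert i J. B ((x(i := y)) j)) * (\<Prod>j\<in>J. K ((x(i := y)) j) y)
          = B y * (\<Prod>j\<in>J. B (x j) * K (x j) y)"
        using I(2,3) by (simp add: prod.distrib mult_ac cong: prod.cong)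
    qed
    also have "\<dots> = B y * (\<integral>\<^sup>+x. (\<Prod>j\<in>J. B (x j) * K (x j) y) \<partial>PiM J (\<lambda>_. M))"
      by (rule nn_integral_cmult) measurable
    also have "\<dots> = B y * (\<integral>\<^sup>+u. B u * K u y \<partial>M) ^ card J"
      using product_nn_integral_prod[OF I(3), of "\<lambda>_ u. B u * K u y"] by simp
    finally show "(\<integral>\<^sup>+x. (\<Prod>j\<in>insert i J. B ((x(i := y)) j)) * (\<Prod>j\<in>J. K ((x(i := y)) j) y)
        \<partial>PiM J (\<lambda>_. M)) = B y * (\<integral>\<^sup>+u. B u * K u y \<partial>M) ^ card J" .
  qed
  finally show ?thesis
    by (simp only: J_def[symmetric] I(4))
qed

lemma sets_borel_ball1 [measurable]: "ball1 r \<in> sets borel"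
  unfolding ball1_def norm1_def by (intro borel_open open_Collect_less continuous_intros)

lemma bounded_ball1: "bounded (ball1 r)"
proof (rule bounded_subset[OF bounded_cball])
  show "ball1 r \<subseteq> cball 0 r"
  proof
    fix w :: "real \<times> real"
    assume "w \<in> ball1 r"
    then show "w \<in> cball 0 r"
      using norm_Pair_le[of "fst w" "snd w"] by (simp add: ball1_def norm1_def)
  qed
qed

lemma nn_integral_star_inv_coords_powr_finite:
  fixes i p :: nat
  assumes "i < p" "c < 1" "0 \<le> r"
  shows "(\<integral>\<^sup>+z. (\<Prod>j<p. indicator (ball1 r) (z j)) * (\<Prod>j\<in>{..<p} - {i}. inv_coords_powr c (z j - z i))
      \<partial>PiM {..<p} (\<lambda>_. lborel)) < \<infinity>"
proof -
  let ?B = "indicator (ball1 r) :: real \<times> real \<Rightarrow> ennreal"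
  define L where "L = (\<integral>\<^sup>+w. indicator ({-2*r..2*r} \<times> {-2*r..2*r}) w * inv_coords_powr c w \<partial>lborel)"
  have [measurable]: "(\<lambda>(u, y). inv_coords_powr c (u - y)) \<in> borel_measurable (lborel \<Otimes>\<^sub>M lborel)"
    by measurable
  have "(\<integral>\<^sup>+z. (\<Prod>j<p. ?B (z j)) * (\<Prod>j\<in>{..<p} - {i}. inv_coords_powr c (z j - z i)) \<partial>PiM {..<p} (\<lambda>_. lborel))
      = (\<integral>\<^sup>+y. ?B y * (\<integral>\<^sup>+u. ?B u * inv_coords_powr c (u - y) \<partial>lborel) ^ (p - 1) \<partial>lborel)"
    using assms(1) by (subst nn_integral_PiM_star) (auto intro: lborel.sigma_finite_measure_axioms)
  also have "\<dots> \<le> (\<integral>\<^sup>+y. ?B y * L ^ (p - 1) \<partial>lborel)"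
  proof (intro nn_integral_mono)
    fix y :: "real \<times> real"
    show "?B y * (\<integral>\<^sup>+u. ?B u * inv_coords_powr c (u - y) \<partial>lborel) ^ (p - 1) \<le> ?B y * L ^ (p - 1)"
    proof (cases "y \<in> ball1 r")
      case True
      then show ?thesis
        unfolding L_def by (intro mult_left_mono power_mono nn_integral_inv_coords_powr_shift_le) auto
    qed simp
  qed
  also have "\<dots> = L ^ (p - 1) * emeasure lborel (ball1 r)"
    by (subst mult.commute) (simp add: nn_integral_cmult_indicator)
  also have "\<dots> < \<infinity>"
    using nn_integral_inv_coords_powr_finite[of c "2 * r"] emeasure_bounded_finite[OF bounded_ball1] assms
    by (simp add: L_def ennreal_mult_less_top power_less_top_ennreal)
  finally show ?thesis .
qed

theorem corollary6p13:
  fixes a r :: real and p :: nat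
  assumes "0 < a" and "a < 2" and "real p < 4 / a" and "0 < r"
  shows "Zint a p r < \<infinity>"
proof (cases "p = 0")
  case True
  have "Zint a p r \<le> (\<integral>\<^sup>+z. 1 \<partial>PiM ({} :: nat set) (\<lambda>_. lborel :: (real \<times> real) measure))"
    unfolding Zint_def True lessThan_0 by (intro nn_integral_mono) (simp add: indicator_def)
  then show ?thesis
    by (simp add: PiM_empty order_le_less_trans)
next
  case False
  define c where "c = real p * (a / 4)"
  have "c < 1"
    using assms(1,3) by (simp add: c_def field_simps)
  let ?star = "\<lambda>i z. (\<Prod>j<p. indicator (ball1 r) (z j)) * (\<Prod>j\<in>{..<p} - {i}. inv_coords_powr c (z j - z i))"
  have "Zint a p r \<le> (\<integral>\<^sup>+z. (\<Sum>i<p. ?star i z) \<partial>PiM {..<p} (\<lambda>_. lborel))"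
    unfolding Zint_def
  proof (intro nn_integral_mono)
    fix z :: "nat \<Rightarrow> real \<times> real"
    have "indicator (PiE {..<p} (\<lambda>_. ball1 r)) z \<le> (\<Prod>j<p. indicator (ball1 r) (z j) :: ennreal)"
      by (auto simp: indicator_def PiE_def Pi_def)
    from mult_mono[OF this prod_inverse_norm1_powr_le] show "indicator (PiE {..<p} (\<lambda>_. ball1 r)) z *
        (\<Prod>ij\<in>{(i, j). i < j \<and> j < p}. inverse (ennreal (norm1 (z (snd ij) - z (fst ij)) powr a)))
      \<le> (\<Sum>i<p. ?star i z)"
      using assms(1) False by (simp add: sum_distrib_left c_def)
  qed
  also have "\<dots> = (\<Sum>i<p. \<integral>\<^sup>+z. ?star i z \<partial>PiM {..<p} (\<lambda>_. lborel))"
    by (intro nn_integral_sum) measurable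
  also have "\<dots> < \<infinity>"
    using nn_integral_star_inv_coords_powr_finite \<open>c < 1\<close> assms(4) by simp
  finally show ?thesis .
qed

end
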